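(* Let $f:\mathbb{R}^n\to\mathbb{R}$ and let $U\subseteq\mathbb{R}^n$ be a nonempty open convex set. Suppose $f$ and $-f$ are prox-bounded with thresholds $\lambda_f,\lambda_{-f}>0$, and $0<1/L<\min\{\lambda_f,\lambda_{-f}\}$. Then the following are equivalent: (a) $\partial_p^{1/L}f(x)\ne\varnothing$ and $\partial_p^{1/L}(-f)(x)\ne\varnothing$ for all $x\in U$; (b) $\partial_F(Lj+f)(x)\ne\varnothing$ and $\partial_F(Lj-f)(x)\ne\varnothing$ for all $x\in U$; (c) $f$ is differentiable on $U$ and $|f(y)-f(x)-\langle\nabla f(x),y-x\rangle|\le\frac L2\|y-x\|^2$ for all $y\in\mathbb{R}^n$ and $x\in U$. When one of these holds, $\nabla f$ is $L$-Lipschitz on $U$.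
   Context: $j:=\frac12\|\cdot\|^2$. Prox-bounded with threshold $\lambda_f=\sup\{\lambda>0:\inf_y\{f(y)+\frac1{2\lambda}\|y-x\|^2\}>-\infty\text{ for some }x\}$. $v\in\partial_p^\lambda f(x)$ iff $f(y)\ge f(x)+\langle v,y-x\rangle-\frac1{2\lambda}\|y-x\|^2$ for all $y$. Fenchel subdifferential: $v\in\partial_F g(x)$ iff $g(y)\ge g(x)+\langle v,y-x\rangle$ for all $y$. *)

theory Defs
  imports "HOL-Analysis.Analysis"
begin

definition jfun :: "'a::real_normed_vector \<Rightarrow> real" where
  "jfun x = (norm x)^2 / 2"

definition prox_bounded_with :: "('a::real_normed_vector \<Rightarrow> real) \<Rightarrow> real \<Rightarrow> bool" where
  "prox_bounded_with f lam \<longleftrightarrow>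
     (\<exists>x. bdd_below (range (\<lambda>y. f y + 1 / (2 * lam) * (norm (y - x))^2)))"

text \<open>prox-boundedness threshold (an extended real; the sup of the empty set is 0 here,
  i.e. f is prox-bounded iff the threshold is positive)\<close>
definition prox_threshold :: "('a::real_normed_vector \<Rightarrow> real) \<Rightarrow> ereal" where
  "prox_threshold f = Sup (ereal ` {lam. lam > 0 \<and> prox_bounded_with f lam})"

definition prox_bounded :: "('a::real_normed_vector \<Rightarrow> real) \<Rightarrow> bool" where
  "prox_bounded f \<longleftrightarrow> (\<exists>lam>0. prox_bounded_with f lam)"

definition prox_subdiff :: "real \<Rightarrow> ('a::real_inner \<Rightarrow> real) \<Rightarrow> 'a \<Rightarrow> 'a set" where
  "prox_subdiff lam f x =
     {v. \<forall>y. f y \<ge> f x + inner v (y - x) - 1 / (2 * lam) * (norm (y - x))^2}"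

definition fenchel_subdiff :: "('a::real_inner \<Rightarrow> real) \<Rightarrow> 'a \<Rightarrow> 'a set" where
  "fenchel_subdiff g x = {v. \<forall>y. g y \<ge> g x + inner v (y - x)}"

definition grad :: "('a::euclidean_space \<Rightarrow> real) \<Rightarrow> 'a \<Rightarrow> 'a" where
  "grad f x = (\<Sum>b\<in>Basis. frechet_derivative f (at x) b *\<^sub>R b)"

end

theory Submission
  imports Defs
begin

text \<open>Adding \<open>L j\<close> turns the \<open>1/L\<close>-proximal subgradient inequality of \<open>g\<close> at \<open>x\<close> into the
  Fenchel subgradient inequality of \<open>L j + g\<close>, with the subgradient shifted by \<open>L x\<close>; this gives
  (a) \<open>\<longleftrightarrow>\<close> (b). If \<open>v\<close> is a proximal subgradient of \<open>f\<close> and \<open>w\<close> one of \<open>-f\<close> at \<open>x\<close>, adding the two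
  inequalities at \<open>y = x + (v + w) / (2L)\<close> gives \<open>\<parallel>v + w\<parallel>\<^sup>2 / (4L) \<le> 0\<close>, so \<open>w = -v\<close> and \<open>f\<close> is
  squeezed between two paraboloids of curvature \<open>L\<close> touching at \<open>x\<close> with slope \<open>v\<close>. Such a squeeze
  makes \<open>f\<close> differentiable at \<open>x\<close> with gradient \<open>v\<close>, giving (a) \<open>\<longleftrightarrow>\<close> (c); adding the squeezes
  at \<open>x\<close> and \<open>x'\<close>, each evaluated at two points, and optimising the points with the parallelogram
  law gives the Lipschitz bound.\<close>

definition quadratic_bound :: "real \<Rightarrow> ('a::real_inner \<Rightarrow> real) \<Rightarrow> 'a \<Rightarrow> 'a \<Rightarrow> bool" where
  "quadratic_bound L f x v \<longleftrightarrow>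
     (\<forall>y. \<bar>f y - f x - inner v (y - x)\<bar> \<le> L / 2 * (norm (y - x))^2)"

lemma prox_subdiff_inverse_eq:
  "prox_subdiff (1 / L) g x = {v. \<forall>y. g y \<ge> g x + inner v (y - x) - L / 2 * (norm (y - x))^2}"
  unfolding prox_subdiff_def by simp

lemma jfun_diff: "jfun y - jfun x = inner x (y - x) + (norm (y - x))^2 / 2"
  unfolding jfun_def power2_norm_eq_inner
  by (simp add: inner_diff_left inner_diff_right inner_commute field_simps)

lemma fenchel_subdiff_add_quadratic:
  "fenchel_subdiff (\<lambda>z. L * jfun z + g z) x = (\<lambda>v. v + L *\<^sub>R x) ` prox_subdiff (1 / L) g x"
proof -
  have L_jfun: "L * jfun y = L * jfun x + inner (L *\<^sub>R x) (y - x) + L / 2 * (norm (y - x))^2"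
    for y using arg_cong[OF jfun_diff[of y x], of "(*) L"] by (simp add: algebra_simps)
  have "L * jfun y + g y \<ge> L * jfun x + g x + inner u (y - x) \<longleftrightarrow>
      g y \<ge> g x + inner (u - L *\<^sub>R x) (y - x) - L / 2 * (norm (y - x))^2" for u y
    unfolding L_jfun[of y] inner_diff_left by argo
  then have "u \<in> fenchel_subdiff (\<lambda>z. L * jfun z + g z) x \<longleftrightarrow> u - L *\<^sub>R x \<in> prox_subdiff (1 / L) g x"
    for u
    unfolding fenchel_subdiff_def prox_subdiff_inverse_eq by simp
  then have "u \<in> fenchel_subdiff (\<lambda>z. L * jfun z + g z) x \<longleftrightarrow>
      (\<exists>v \<in> prox_subdiff (1 / L) g x. u = v + L *\<^sub>R x)" for u
    by (metis add_diff_cancel diff_add_cancel)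
  then show ?thesis
    by blast
qed

lemma prox_subdiff_neg_eq_uminus:
  fixes f :: "'a::real_inner \<Rightarrow> real"
  assumes L: "L > 0"
    and v: "v \<in> prox_subdiff (1 / L) f x"
    and w: "w \<in> prox_subdiff (1 / L) (\<lambda>z. - f z) x"
  shows "w = - v"
proof -
  define h where "h = (1 / (2 * L)) *\<^sub>R (v + w)"
  have "0 \<ge> inner (v + w) h - L * (norm h)^2"
    using v w unfolding prox_subdiff_inverse_eq
    by (auto simp: inner_add_left dest!: spec[where x = "x + h"])
  also have "inner (v + w) h - L * (norm h)^2 = (norm (v + w))^2 / (4 * L)"
  proof -
    have "inner (v + w) h = (norm (v + w))^2 / (2 * L)"
      unfolding h_def by (simp add: power2_norm_eq_inner)
    moreover have "(norm h)^2 = (norm (v + w))^2 / (2 * L)^2"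
      unfolding h_def using L by (simp add: power_divide)
    ultimately show ?thesis
      using L by (simp add: field_simps power2_eq_square)
  qed
  finally have "norm (v + w) = 0"
    using L by (simp add: divide_le_0_iff)
  then show ?thesis
    by (simp add: add_eq_0_iff2 add.commute)
qed

lemma quadratic_bound_iff_prox_subdiff:
  "quadratic_bound L f x v \<longleftrightarrow>
     v \<in> prox_subdiff (1 / L) f x \<and> - v \<in> prox_subdiff (1 / L) (\<lambda>z. - f z) x"
proof -
  have "\<bar>f y - f x - inner v (y - x)\<bar> \<le> L / 2 * (norm (y - x))^2 \<longleftrightarrow>
      f y \<ge> f x + inner v (y - x) - L / 2 * (norm (y - x))^2 \<and>
      - f y \<ge> - f x + inner (- v) (y - x) - L / 2 * (norm (y - x))^2" for y
    by (unfold abs_le_iff inner_minus_left) arith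
  then show ?thesis
    unfolding quadratic_bound_def prox_subdiff_inverse_eq by blast
qed

lemma prox_subdiffs_nonempty_iff_quadratic_bound:
  fixes f :: "'a::real_inner \<Rightarrow> real"
  assumes "L > 0"
  shows "prox_subdiff (1 / L) f x \<noteq> {} \<and> prox_subdiff (1 / L) (\<lambda>z. - f z) x \<noteq> {} \<longleftrightarrow>
    (\<exists>v. quadratic_bound L f x v)"
  using prox_subdiff_neg_eq_uminus[OF assms] quadratic_bound_iff_prox_subdiff by blast

lemma quadratic_bound_has_derivative:
  fixes f :: "'a::real_inner \<Rightarrow> real"
  assumes L: "L > 0" and bound: "quadratic_bound L f x v"
  shows "(f has_derivative inner v) (at x)"
  unfolding has_derivative_at_alt
proof (intro conjI allI impI bounded_linear_inner_right)
  fix e :: real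
  assume e: "e > 0"
  show "\<exists>d>0. \<forall>y. norm (y - x) < d \<longrightarrow> norm (f y - f x - inner v (y - x)) \<le> e * norm (y - x)"
  proof (intro exI[of _ "2 * e / L"] conjI allI impI)
    show "2 * e / L > 0"
      using e L by simp
    fix y
    assume y: "norm (y - x) < 2 * e / L"
    have "norm (f y - f x - inner v (y - x)) \<le> (L / 2 * norm (y - x)) * norm (y - x)"
      using bound by (simp add: quadratic_bound_def power2_eq_square mult.assoc)
    also have "\<dots> \<le> e * norm (y - x)"
      by (rule mult_right_mono) (use y L in \<open>auto simp: field_simps\<close>)
    finally show "norm (f y - f x - inner v (y - x)) \<le> e * norm (y - x)" .
  qed
qed

lemma grad_eq_if_has_derivative:
  assumes "(f has_derivative inner v) (at x)"
  shows "grad f x = v"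
  unfolding grad_def frechet_derivative_at[OF assms, symmetric]
  by (simp add: euclidean_representation)

lemma quadratic_bound_grad:
  fixes f :: "'a::euclidean_space \<Rightarrow> real"
  assumes "L > 0" and "quadratic_bound L f x v"
  shows "f differentiable (at x)" and "grad f x = v"
  using quadratic_bound_has_derivative[OF assms] grad_eq_if_has_derivative
  by (auto simp: differentiable_def)

lemma quadratic_boundD:
  assumes "quadratic_bound L f x g"
  shows "f y \<le> f x + inner g (y - x) + L / 2 * (norm (y - x))^2"
    and "f y \<ge> f x + inner g (y - x) - L / 2 * (norm (y - x))^2"
  using assms unfolding quadratic_bound_def abs_le_iff by (smt (verit))+

lemma quadratic_bounds_four_points:
  fixes f :: "'a::real_inner \<Rightarrow> real"
  assumes bx: "quadratic_bound L f x g" and bx': "quadratic_bound L f x' g'"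
    and pq: "p - q = x' - x"
  shows "inner (g' - g) (p + q) \<le> L * ((norm p)^2 + (norm q)^2)"
proof -
  have "f (x + p) \<le> f x + inner g p + L / 2 * (norm p)^2"
    using quadratic_boundD(1)[OF bx, of "x + p"] by simp
  moreover have "f (x' + q) \<ge> f x' + inner g' q - L / 2 * (norm q)^2"
    using quadratic_boundD(2)[OF bx', of "x' + q"] by simp
  moreover have "f (x' - p) \<le> f x' - inner g' p + L / 2 * (norm p)^2"
    using quadratic_boundD(1)[OF bx', of "x' - p"] by (simp add: inner_minus_right)
  moreover have "f (x - q) \<ge> f x - inner g q - L / 2 * (norm q)^2"
    using quadratic_boundD(2)[OF bx, of "x - q"] by (simp add: inner_minus_right)
  moreover have "x + p = x' + q" and "x' - p = x - q"
    using pq by (simp_all add: algebra_simps)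
  ultimately show ?thesis
    by (simp add: inner_diff_left inner_add_right algebra_simps)
qed

lemma parallelogram_law:
  fixes a b :: "'a::real_inner"
  shows "(norm (a + b))^2 + (norm (a - b))^2 = 2 * ((norm a)^2 + (norm b)^2)"
  using dot_norm[of a b] dot_norm_neg[of a b] by simp

lemma quadratic_bounds_lipschitz:
  fixes f :: "'a::real_inner \<Rightarrow> real"
  assumes L: "L > 0"
    and bx: "quadratic_bound L f x g" and bx': "quadratic_bound L f x' g'"
  shows "norm (g' - g) \<le> L * norm (x' - x)"
proof -
  define D where "D = g' - g"
  define d where "d = x' - x"
  define a where "a = (1 / (2 * L)) *\<^sub>R D"
  define b where "b = (1 / 2) *\<^sub>R d"
  have "(a + b) - (a - b) = d"
    unfolding b_def by (simp flip: scaleR_add_left)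
  then have "inner D ((a + b) + (a - b)) \<le> L * ((norm (a + b))^2 + (norm (a - b))^2)"
    using quadratic_bounds_four_points[OF bx bx'] unfolding D_def d_def by blast
  moreover have "(a + b) + (a - b) = (1 / L) *\<^sub>R D"
    unfolding a_def by (simp flip: scaleR_add_left)
  moreover have "(norm (a + b))^2 + (norm (a - b))^2 = (norm D)^2 / (2 * L^2) + (norm d)^2 / 2"
    unfolding parallelogram_law a_def b_def using L by (simp add: power_divide)
  ultimately have "(norm D)^2 / L \<le> (norm D)^2 / (2 * L) + L * (norm d)^2 / 2"
    using L by (simp add: dot_square_norm power2_eq_square field_simps)
  then have "(norm D)^2 \<le> (L * norm d)^2"
    using L by (simp add: power_mult_distrib power2_eq_square field_simps)
  then have "norm D \<le> L * norm d"
    by (rule power2_le_imp_le) (use L in simp)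
  then show ?thesis
    unfolding D_def d_def .
qed

theorem mainTheorem13:
  fixes f :: "'a::euclidean_space \<Rightarrow> real"
    and U :: "'a set" and L :: real
  assumes "U \<noteq> {}" and "open U" and "convex U"
    and "prox_bounded f" and "prox_bounded (\<lambda>x. - f x)"
    and "prox_threshold f > 0" and "prox_threshold (\<lambda>x. - f x) > 0"
    and "L > 0"
    and "ereal (1 / L) < min (prox_threshold f) (prox_threshold (\<lambda>x. - f x))"
  defines "A \<equiv> (\<forall>x\<in>U. prox_subdiff (1 / L) f x \<noteq> {} \<and>
                         prox_subdiff (1 / L) (\<lambda>z. - f z) x \<noteq> {})"
    and "B \<equiv> (\<forall>x\<in>U. fenchel_subdiff (\<lambda>z. L * jfun z + f z) x \<noteq> {} \<and>
                         fenchel_subdiff (\<lambda>z. L * jfun z - f z) x \<noteq> {})"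
    and "C \<equiv> ((\<forall>x\<in>U. f differentiable (at x)) \<and>
              (\<forall>x\<in>U. \<forall>y. \<bar>f y - f x - inner (grad f x) (y - x)\<bar> \<le> L / 2 * (norm (y - x))^2))"
  shows "(A \<longleftrightarrow> B) \<and> (B \<longleftrightarrow> C) \<and> ((A \<or> B \<or> C) \<longrightarrow> L-lipschitz_on U (grad f))"
proof -
  have AB: "A \<longleftrightarrow> B"
    using fenchel_subdiff_add_quadratic[of L f] fenchel_subdiff_add_quadratic[of L "\<lambda>z. - f z"]
    unfolding A_def B_def by simp
  have C_iff: "C \<longleftrightarrow> (\<forall>x\<in>U. quadratic_bound L f x (grad f x))"
    unfolding C_def quadratic_bound_def[symmetric] using quadratic_bound_grad(1)[OF \<open>L > 0\<close>] by blast
  have AC: "A \<longleftrightarrow> C"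
    unfolding A_def C_iff prox_subdiffs_nonempty_iff_quadratic_bound[OF \<open>L > 0\<close>]
    using quadratic_bound_grad(2)[OF \<open>L > 0\<close>] by metis
  have "L-lipschitz_on U (grad f)" if C
  proof (rule lipschitz_onI)
    fix x y
    assume "x \<in> U" "y \<in> U"
    with \<open>C\<close> have "norm (grad f x - grad f y) \<le> L * norm (x - y)"
      unfolding C_iff by (blast intro: quadratic_bounds_lipschitz[OF \<open>L > 0\<close>])
    then show "dist (grad f x) (grad f y) \<le> L * dist x y"
      by (simp add: dist_norm)
  qed (use \<open>L > 0\<close> in simp)
  with AB AC show ?thesis by blast
qed

end
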